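(* Let $k,D,s^{\mathrm{in}}>0$, let $K_1,\dots,K_5>0$, and let $\mu:[0,\infty)\to[0,\infty)$ satisfy $\mu(0)=0$, $\mu(s)>0$ for $s>0$, $\mu\le\mu_{\max}<\infty$, and be continuous at $0$. For $x=(b,s)^*\in\mathbb{R}_+^2$ define the rates $$\lambda_1(x)=K_1\mu(s)b,\quad \lambda_2(x)=K_2k\mu(s)b,\quad \lambda_3(x)=K_3Ds^{\mathrm{in}},\quad \lambda_4(x)=K_4Db,\quad \lambda_5(x)=K_5Ds,$$ the state-dependent jumps $$\nu_1(x)=\begin{pmatrix}\frac1{K_1}\\0\end{pmatrix},\ \nu_2(x)=-\begin{pmatrix}0\\ \frac{1\wedge K_2 s}{K_2}\end{pmatrix},\ \nu_3(x)=\begin{pmatrix}0\\ \frac1{K_3}\end{pmatrix},\ \nu_4(x)=-\begin{pmatrix}\frac{1\wedge K_4 b}{K_4}\\0\end{pmatrix},\ \nu_5(x)=-\begin{pmatrix}0\\ \frac{1\wedge K_5 s}{K_5}\end{pmatrix},$$ and the constant jumps $$\nu_1=\begin{pmatrix}\frac1{K_1}\\0\end{pmatrix},\ \nu_2=-\begin{pmatrix}0\\ \frac1{K_2}\end{pmatrix},\ \nu_3=\begin{pmatrix}0\\ \frac1{K_3}\end{pmatrix},\ \nu_4=-\begin{pmatrix}\frac1{K_4}\\0\end{pmatrix},\ \nu_5=-\begin{pmatrix}0\\ \frac1{K_5}\end{pmatrix}.$$ Let $\lambda(x)=\sum_{i=1}^5\lambda_i(x)$, $\bar\lambda_i(x)=\lambda_i(x)/\lambda(x)$,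 $f_K(x)=\sum_{i=1}^5\nu_i(x)\lambda_i(x)$, $m_K(x)=\sum_{i=1}^5\nu_i(x)\bar\lambda_i(x)$, $m(x)=\sum_{i=1}^5\nu_i\bar\lambda_i(x)$, and $$f(x)=\begin{pmatrix}\mu(s)b-Db\\ -k\mu(s)b+D(s^{\mathrm{in}}-s)\end{pmatrix}.$$ Then $|\nu_i(x)|\le|\nu_i|$ for all $i$ and $x$. Let $$\mathcal{R}_K=\Big\{x=(b,s)^*\in\mathbb{R}_+^2:\ b\le \tfrac1{K_4}\ \text{or}\ s\le\tfrac1{K_2}\ \text{or}\ s\le\tfrac1{K_5}\Big\}.$$ For $x\notin\mathcal{R}_K$ one has $\nu_i(x)=\nu_i$ for all $i$, $m_K(x)=m(x)$ and $f_K(x)=f(x)$. For all $x=(b,s)^*\in\mathbb{R}_+^2$: $$|\nu_i(x)-\nu_i|\le\frac1{\min_{j=1,\dots,5}K_j}\ (i=1,\dots,5),\qquad |m_K(x)-m(x)|\le\frac1{\min_{j=1,\dots,5}K_j},$$ $$|f_K(x)-f(x)|\le(1-K_2s)^+k\mu(s)b+(1-K_4b)^+Db+(1-K_5s)^+Ds.$$ Consequently $f_K(x)\to f(x)$ as $K_i\to\infty$ for all $i=1,\dots,5$, and this convergence is uniform on every compact subset of $(0,\infty)^2$.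
   Context: Here $|\cdot|$ is the Euclidean norm on $\mathbb{R}^2$, $a\wedge c=\min(a,c)$ and $a^+=\max(a,0)$. Note $\lambda(x)\ge K_3Ds^{\mathrm{in}}>0$, so $\bar\lambda_i$ is well defined. These objects describe a stochastic chemostat model with biomass concentration $b$ and substrate concentration $s$, dilution rate $D$, inflow substrate concentration $s^{\mathrm{in}}$, stoichiometric coefficient $k$, specific growth rate $\mu$, and scale parameters $K_i$. *)

theory Defs
  imports "HOL-Analysis.Analysis"
begin

(* Scale parameters K_1..K_5 are given as K :: nat \<Rightarrow> real, indices 1..5.
   Parameters: K, k (stoichiometric), D (dilution), sinn (s^in), mu (growth rate). *)

definition Rplus2 :: "(real \<times> real) set" where
  "Rplus2 = {(b, s). 0 \<le> b \<and> 0 \<le> s}"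

definition lam :: "(nat \<Rightarrow> real) \<Rightarrow> real \<Rightarrow> real \<Rightarrow> real \<Rightarrow> (real \<Rightarrow> real) \<Rightarrow> nat \<Rightarrow> real \<times> real \<Rightarrow> real" where
  "lam K k D sinn mu i x = (case x of (b, s) \<Rightarrow>
      if i = 1 then K 1 * mu s * b
      else if i = 2 then K 2 * k * mu s * b
      else if i = 3 then K 3 * D * sinn
      else if i = 4 then K 4 * D * b
      else if i = 5 then K 5 * D * s
      else 0)"

definition lamtot :: "(nat \<Rightarrow> real) \<Rightarrow> real \<Rightarrow> real \<Rightarrow> real \<Rightarrow> (real \<Rightarrow> real) \<Rightarrow> real \<times> real \<Rightarrow> real" where
  "lamtot K k D sinn mu x = (\<Sum>i\<in>{1..5}. lam K k D sinn mu i x)"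

definition lambar :: "(nat \<Rightarrow> real) \<Rightarrow> real \<Rightarrow> real \<Rightarrow> real \<Rightarrow> (real \<Rightarrow> real) \<Rightarrow> nat \<Rightarrow> real \<times> real \<Rightarrow> real" where
  "lambar K k D sinn mu i x = lam K k D sinn mu i x / lamtot K k D sinn mu x"

definition nuK :: "(nat \<Rightarrow> real) \<Rightarrow> nat \<Rightarrow> real \<times> real \<Rightarrow> real \<times> real" where
  "nuK K i x = (case x of (b, s) \<Rightarrow>
      if i = 1 then (1 / K 1, 0)
      else if i = 2 then - (0, min 1 (K 2 * s) / K 2)
      else if i = 3 then (0, 1 / K 3)
      else if i = 4 then - (min 1 (K 4 * b) / K 4, 0)
      else if i = 5 then - (0, min 1 (K 5 * s) / K 5)
      else (0, 0))"

definition nu :: "(nat \<Rightarrow> real) \<Rightarrow> nat \<Rightarrow> real \<times> real" where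
  "nu K i =
      (if i = 1 then (1 / K 1, 0)
      else if i = 2 then - (0, 1 / K 2)
      else if i = 3 then (0, 1 / K 3)
      else if i = 4 then - (1 / K 4, 0)
      else if i = 5 then - (0, 1 / K 5)
      else (0, 0))"

definition fK :: "(nat \<Rightarrow> real) \<Rightarrow> real \<Rightarrow> real \<Rightarrow> real \<Rightarrow> (real \<Rightarrow> real) \<Rightarrow> real \<times> real \<Rightarrow> real \<times> real" where
  "fK K k D sinn mu x = (\<Sum>i\<in>{1..5}. lam K k D sinn mu i x *\<^sub>R nuK K i x)"

definition mK :: "(nat \<Rightarrow> real) \<Rightarrow> real \<Rightarrow> real \<Rightarrow> real \<Rightarrow> (real \<Rightarrow> real) \<Rightarrow> real \<times> real \<Rightarrow> real \<times> real" where
  "mK K k D sinn mu x = (\<Sum>i\<in>{1..5}. lambar K k D sinn mu i x *\<^sub>R nuK K i x)"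

definition m :: "(nat \<Rightarrow> real) \<Rightarrow> real \<Rightarrow> real \<Rightarrow> real \<Rightarrow> (real \<Rightarrow> real) \<Rightarrow> real \<times> real \<Rightarrow> real \<times> real" where
  "m K k D sinn mu x = (\<Sum>i\<in>{1..5}. lambar K k D sinn mu i x *\<^sub>R nu K i)"

definition f :: "real \<Rightarrow> real \<Rightarrow> real \<Rightarrow> (real \<Rightarrow> real) \<Rightarrow> real \<times> real \<Rightarrow> real \<times> real" where
  "f k D sinn mu x = (case x of (b, s) \<Rightarrow>
      (mu s * b - D * b, - k * mu s * b + D * (sinn - s)))"

definition RK :: "(nat \<Rightarrow> real) \<Rightarrow> (real \<times> real) set" where
  "RK K = {(b, s). 0 \<le> b \<and> 0 \<le> s \<and> (b \<le> 1 / K 4 \<or> s \<le> 1 / K 2 \<or> s \<le> 1 / K 5)}"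

definition Kmin :: "(nat \<Rightarrow> real) \<Rightarrow> real" where
  "Kmin K = Min (K ` {1..5})"

end

theory Submission
  imports Defs
begin

text \<open>The truncation \<open>min 1 (K t)\<close> only changes a jump within distance \<open>1/K\<close> of the
  boundary of the quadrant, i.e. on \<open>R_K\<close>, so off \<open>R_K\<close> the truncated and constant jumps
  agree. Each difference \<open>\<nu>_i(x) - \<nu>_i\<close> has length at most \<open>1/K_i\<close>, and the normalized
  rates are probability weights (\<open>\<lambda>_3 > 0\<close>), so \<open>m_K - m\<close> is a convex combination of such
  vectors. Finally \<open>f_K\<close> is \<open>f\<close> with the outflow terms damped by the factors
  \<open>min 1 (K_i t)\<close>; each damping defect \<open>t (1 - K_i t)\<^sup>+\<close> vanishes once \<open>K_i \<ge> 1/t\<close>,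
  uniformly where \<open>t\<close> stays away from \<open>0\<close>.\<close>

lemma five_eq: "{1..5::nat} = {1, 2, 3, 4, 5}"
  by auto

lemma truncated_jump_bounds:
  fixes c t :: real
  assumes "c > 0" "t \<ge> 0"
  shows "\<bar>min 1 (c * t) / c\<bar> \<le> 1 / c" and "\<bar>min 1 (c * t) / c - 1 / c\<bar> \<le> 1 / c"
proof -
  have a: "0 \<le> min 1 (c * t)" "min 1 (c * t) \<le> 1"
    using assms by auto
  then show "\<bar>min 1 (c * t) / c\<bar> \<le> 1 / c"
    using assms by (simp add: divide_right_mono)
  have "min 1 (c * t) / c - 1 / c = - ((1 - min 1 (c * t)) / c)"
    by (simp add: diff_divide_distrib)
  then show "\<bar>min 1 (c * t) / c - 1 / c\<bar> \<le> 1 / c"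
    using a assms by (simp add: divide_right_mono)
qed

lemma scales_pos:
  fixes K :: "nat \<Rightarrow> real"
  assumes "\<forall>i\<in>{1..5}. K i > 0"
  shows "K 1 > 0" "K 2 > 0" "K 3 > 0" "K 4 > 0" "K 5 > 0"
  using assms by auto

lemma norm_Pair_zero:
  fixes a :: real
  shows "norm (a, 0 :: real) = \<bar>a\<bar>" and "norm (0 :: real, a) = \<bar>a\<bar>"
  by (simp_all add: norm_Pair)

lemma
  assumes "\<forall>i\<in>{1..5}. K i > 0" "i \<in> {1..5}" "b \<ge> 0" "s \<ge> 0"
  shows norm_nuK_le_norm_nu: "norm (nuK K i (b, s)) \<le> norm (nu K i)"
    and norm_nuK_minus_nu_le: "norm (nuK K i (b, s) - nu K i) \<le> 1 / K i"
proof -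
  note K = scales_pos[OF assms(1)]
  from assms(2) consider "i = 1" | "i = 2" | "i = 3" | "i = 4" | "i = 5"
    by force
  then have "norm (nuK K i (b, s)) \<le> norm (nu K i) \<and> norm (nuK K i (b, s) - nu K i) \<le> 1 / K i"
  proof cases
    case 2
    then show ?thesis
      using truncated_jump_bounds[OF K(2) assms(4)] K(2) by (simp add: nuK_def nu_def norm_Pair_zero)
  next
    case 4
    then show ?thesis
      using truncated_jump_bounds[OF K(4) assms(3)] K(4) by (simp add: nuK_def nu_def norm_Pair_zero)
  next
    case 5
    then show ?thesis
      using truncated_jump_bounds[OF K(5) assms(4)] K(5) by (simp add: nuK_def nu_def norm_Pair_zero)
  qed (use K in \<open>simp_all add: nuK_def nu_def norm_Pair_zero\<close>)
  then show "norm (nuK K i (b, s)) \<le> norm (nu K i)" "norm (nuK K i (b, s) - nu K i) \<le> 1 / K i"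
    by blast+
qed

lemma nuK_eq_nu:
  assumes "K 4 * b \<ge> 1" "K 2 * s \<ge> 1" "K 5 * s \<ge> 1"
  shows "nuK K i (b, s) = nu K i"
  using assms by (simp add: nuK_def nu_def)

lemma inverse_le_inverse_Kmin:
  assumes "\<forall>i\<in>{1..5}. K i > 0" "i \<in> {1..5}"
  shows "1 / K i \<le> 1 / Kmin K"
proof -
  have "Kmin K \<in> K ` {1..5}"
    unfolding Kmin_def by (intro Min_in) auto
  then have pos: "Kmin K > 0"
    using assms(1) by auto
  have "Kmin K \<le> K i"
    unfolding Kmin_def using assms(2) by (intro Min_le) auto
  then show "1 / K i \<le> 1 / Kmin K"
    using pos by (intro divide_left_mono) auto
qed

lemma norm_nuK_minus_nu_le_Kmin:
  assumes "\<forall>i\<in>{1..5}. K i > 0" "i \<in> {1..5}" "b \<ge> 0" "s \<ge> 0"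
  shows "norm (nuK K i (b, s) - nu K i) \<le> 1 / Kmin K"
  using norm_nuK_minus_nu_le[OF assms] inverse_le_inverse_Kmin[OF assms(1,2)] by linarith

lemma lam_nonneg:
  assumes "\<forall>i\<in>{1..5}. K i > 0" "k > 0" "D > 0" "sinn > 0" "mu s \<ge> 0" "b \<ge> 0" "s \<ge> 0"
  shows "lam K k D sinn mu i (b, s) \<ge> 0"
  using scales_pos[OF assms(1)] assms(2-) by (auto simp: lam_def)

lemma lamtot_pos:
  assumes "\<forall>i\<in>{1..5}. K i > 0" "k > 0" "D > 0" "sinn > 0" "mu s \<ge> 0" "b \<ge> 0" "s \<ge> 0"
  shows "lamtot K k D sinn mu (b, s) > 0"
proof -
  have "0 < lam K k D sinn mu 3 (b, s)"
    using assms by (simp add: lam_def)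
  also have "\<dots> \<le> lamtot K k D sinn mu (b, s)"
    unfolding lamtot_def using assms by (intro member_le_sum) (auto intro: lam_nonneg)
  finally show ?thesis .
qed

lemma lambar_nonneg:
  assumes "\<forall>i\<in>{1..5}. K i > 0" "k > 0" "D > 0" "sinn > 0" "mu s \<ge> 0" "b \<ge> 0" "s \<ge> 0"
  shows "lambar K k D sinn mu i (b, s) \<ge> 0"
  unfolding lambar_def using assms by (intro divide_nonneg_pos lam_nonneg lamtot_pos)

lemma sum_lambar_eq_1:
  assumes "lamtot K k D sinn mu x > 0"
  shows "(\<Sum>i\<in>{1..5}. lambar K k D sinn mu i x) = 1"
  using assms unfolding lambar_def sum_divide_distrib[symmetric] lamtot_def[symmetric] by simp

lemma norm_convex_combination_le:
  fixes v :: "'i \<Rightarrow> 'a::real_normed_vector"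
  assumes "finite I" "sum w I = 1" "\<And>i. i \<in> I \<Longrightarrow> w i \<ge> 0" "\<And>i. i \<in> I \<Longrightarrow> norm (v i) \<le> c"
  shows "norm (\<Sum>i\<in>I. w i *\<^sub>R v i) \<le> c"
proof -
  have "(\<Sum>i\<in>I. w i *\<^sub>R v i) \<in> cball 0 c"
    using assms by (intro convex_sum convex_cball) auto
  then show ?thesis
    by simp
qed

lemma mK_minus_m:
  "mK K k D sinn mu x - m K k D sinn mu x
     = (\<Sum>i\<in>{1..5}. lambar K k D sinn mu i x *\<^sub>R (nuK K i x - nu K i))"
  unfolding mK_def m_def sum_subtractf[symmetric] by (simp add: scaleR_diff_right)

lemma norm_mK_minus_m_le:
  assumes "\<forall>i\<in>{1..5}. K i > 0" "k > 0" "D > 0" "sinn > 0" "mu s \<ge> 0" "b \<ge> 0" "s \<ge> 0"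
  shows "norm (mK K k D sinn mu (b, s) - m K k D sinn mu (b, s)) \<le> 1 / Kmin K"
  unfolding mK_minus_m
proof (rule norm_convex_combination_le)
  show "(\<Sum>i\<in>{1..5}. lambar K k D sinn mu i (b, s)) = 1"
    using lamtot_pos[where mu = mu, OF assms] by (rule sum_lambar_eq_1)
  show "lambar K k D sinn mu i (b, s) \<ge> 0" for i
    using assms by (rule lambar_nonneg)
  show "norm (nuK K i (b, s) - nu K i) \<le> 1 / Kmin K" if "i \<in> {1..5}" for i
    using assms(1) that assms(6,7) by (rule norm_nuK_minus_nu_le_Kmin)
qed simp

lemma fK_minus_f:
  assumes "\<forall>i\<in>{1..5}. K i > 0"
  shows "fK K k D sinn mu (b, s) - f k D sinn mu (b, s) =
    (D * b * max 0 (1 - K 4 * b),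
     k * mu s * b * max 0 (1 - K 2 * s) + D * s * max 0 (1 - K 5 * s))"
proof -
  have "fK K k D sinn mu (b, s) =
    (mu s * b - D * b * min 1 (K 4 * b),
     - k * mu s * b * min 1 (K 2 * s) + D * sinn - D * s * min 1 (K 5 * s))"
    using scales_pos[OF assms] unfolding fK_def five_eq by (simp add: lam_def nuK_def field_simps)
  moreover have "min 1 t = 1 - max 0 (1 - t)" for t :: real
    by (simp add: min_def max_def)
  ultimately show ?thesis
    unfolding f_def by (simp add: algebra_simps)
qed

lemma norm_fK_minus_f_le:
  assumes "\<forall>i\<in>{1..5}. K i > 0" "k > 0" "D > 0" "mu s \<ge> 0" "b \<ge> 0" "s \<ge> 0"
  shows "norm (fK K k D sinn mu (b, s) - f k D sinn mu (b, s))
    \<le> max 0 (1 - K 2 * s) * k * mu s * b + max 0 (1 - K 4 * b) * D * b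
       + max 0 (1 - K 5 * s) * D * s"
proof -
  have "norm (fK K k D sinn mu (b, s) - f k D sinn mu (b, s))
      \<le> \<bar>D * b * max 0 (1 - K 4 * b)\<bar>
        + \<bar>k * mu s * b * max 0 (1 - K 2 * s) + D * s * max 0 (1 - K 5 * s)\<bar>"
    unfolding fK_minus_f[OF assms(1)] by (metis norm_Pair_le real_norm_def)
  then show ?thesis
    using assms by (simp add: algebra_simps)
qed

text \<open>With Isabelle's \<open>1 / 0 = 0\<close> the hypothesis \<open>1 / t \<le> c\<close> is vacuous at \<open>t = 0\<close>,
  where the defect vanishes anyway.\<close>

lemma damping_defect_eq_0:
  fixes c t :: real
  assumes "t \<ge> 0" "1 / t \<le> c"
  shows "t * max 0 (1 - c * t) = 0"
proof (cases "t = 0")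
  case False
  then have "1 \<le> c * t"
    using assms by (simp add: divide_le_eq)
  then show ?thesis
    by simp
qed simp

lemma fK_eq_f:
  assumes "\<forall>i\<in>{1..5}. K i > 0" "mu 0 = 0" "b \<ge> 0" "s \<ge> 0"
    and "1 / b \<le> K 4" "1 / s \<le> K 2" "1 / s \<le> K 5"
  shows "fK K k D sinn mu (b, s) = f k D sinn mu (b, s)"
proof -
  have b: "b * max 0 (1 - K 4 * b) = 0" and s5: "s * max 0 (1 - K 5 * s) = 0"
    and s2: "s * max 0 (1 - K 2 * s) = 0"
    using assms by (simp_all add: damping_defect_eq_0)
  have "mu s * max 0 (1 - K 2 * s) = 0"
    using s2 \<open>mu 0 = 0\<close> by (cases "s = 0") auto
  moreover have "k * mu s * b * max 0 (1 - K 2 * s) = k * b * (mu s * max 0 (1 - K 2 * s))"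
    by (simp only: mult_ac)
  ultimately have z2: "k * mu s * b * max 0 (1 - K 2 * s) = 0"
    by (metis mult_zero_right)
  have z4: "D * b * max 0 (1 - K 4 * b) = 0" and z5: "D * s * max 0 (1 - K 5 * s) = 0"
    by (simp_all only: mult.assoc b s5 mult_zero_right)
  have "fK K k D sinn mu (b, s) - f k D sinn mu (b, s) = 0"
    unfolding fK_minus_f[OF assms(1)] z2 z4 z5 by (simp add: zero_prod_def)
  then show ?thesis
    by simp
qed

lemma fK_eq_f_for_large_scales:
  assumes "C \<subseteq> Rplus2" "mu 0 = 0" "\<forall>(b, s)\<in>C. 1 / b \<le> L \<and> 1 / s \<le> L"
  shows "\<exists>M. \<forall>K'. (\<forall>i\<in>{1..5}. K' i \<ge> M) \<longrightarrow> (\<forall>x\<in>C. fK K' k D sinn mu x = f k D sinn mu x)"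
proof (intro exI allI impI ballI)
  fix K' :: "nat \<Rightarrow> real" and x
  assume K': "\<forall>i\<in>{1..5}. max L 0 + 1 \<le> K' i" and "x \<in> C"
  obtain b s where x: "x = (b, s)"
    by (cases x)
  have "(b, s) \<in> Rplus2" "1 / b \<le> L \<and> 1 / s \<le> L"
    using \<open>x \<in> C\<close> assms(1,3) unfolding x by auto
  then have bs: "b \<ge> 0" "s \<ge> 0" "1 / b \<le> L" "1 / s \<le> L"
    by (simp_all add: Rplus2_def)
  have "L \<le> max L 0" "0 \<le> max L 0"
    by simp_all
  then have K'_ge: "0 < K' i" "L \<le> K' i" if "i \<in> {1..5}" for i
    using K'[rule_format, OF that] by linarith+
  have pos: "\<forall>i\<in>{1..5}. K' i > 0"
    using K'_ge(1) by blast
  have "1 / b \<le> K' 4" "1 / s \<le> K' 2" "1 / s \<le> K' 5"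
    using bs K'_ge(2)[of 4] K'_ge(2)[of 2] K'_ge(2)[of 5] by simp_all
  then show "fK K' k D sinn mu x = f k D sinn mu x"
    unfolding x using fK_eq_f[where mu = mu, OF pos assms(2) bs(1,2)] by blast
qed

lemma compact_in_open_quadrant_inverse_bounded:
  fixes C :: "(real \<times> real) set"
  assumes "compact C" "C \<subseteq> {0<..} \<times> {0<..}"
  shows "\<exists>L. \<forall>(b, s)\<in>C. 1 / b \<le> L \<and> 1 / s \<le> L"
proof -
  have bounded_above: "\<exists>a. \<forall>x\<in>C. g x \<le> a" if "continuous_on C g" for g :: "real \<times> real \<Rightarrow> real"
  proof -
    have "bounded (g ` C)"
      using that assms(1) by (intro compact_imp_bounded compact_continuous_image)
    then obtain a where "\<forall>x\<in>C. \<bar>g x\<bar> \<le> a"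
      by (auto simp: bounded_iff)
    then show ?thesis
      by (meson abs_ge_self order_trans)
  qed
  have "fst x \<noteq> 0 \<and> snd x \<noteq> 0" if "x \<in> C" for x
    using subsetD[OF assms(2) that] by (auto simp: mem_Times_iff)
  then have "continuous_on C (\<lambda>x. 1 / fst x)" "continuous_on C (\<lambda>x. 1 / snd x)"
    by (intro continuous_on_divide continuous_on_const continuous_on_fst continuous_on_snd
        continuous_on_id; auto)+
  then obtain a1 a2 where "\<forall>x\<in>C. 1 / fst x \<le> a1" "\<forall>x\<in>C. 1 / snd x \<le> a2"
    using bounded_above by blast
  then have "\<forall>(b, s)\<in>C. 1 / b \<le> max a1 a2 \<and> 1 / s \<le> max a1 a2"
    by fastforce
  then show ?thesis
    by blast
qed

lemma off_RK_scales_large: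
  assumes "\<forall>i\<in>{1..5}. K i > 0" "(b, s) \<in> Rplus2 - RK K"
  shows "0 < b" "0 < s" "1 < K 4 * b" "1 < K 2 * s" "1 < K 5 * s"
proof -
  note K = scales_pos[OF assms(1)]
  have "1 / K 4 < b" "1 / K 2 < s" "1 / K 5 < s"
    using assms(2) by (auto simp: Rplus2_def RK_def)
  moreover have "0 < 1 / K 4" "0 < 1 / K 2"
    using K by simp_all
  ultimately show "0 < b" "0 < s"
    by linarith+
  show "1 < K 4 * b" "1 < K 2 * s" "1 < K 5 * s"
    using K \<open>1 / K 4 < b\<close> \<open>1 / K 2 < s\<close> \<open>1 / K 5 < s\<close> by (simp_all add: field_simps)
qed

lemma off_RK_agree:
  assumes "\<forall>i\<in>{1..5}. K i > 0" "mu 0 = 0" "x \<in> Rplus2 - RK K"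
  shows "\<forall>i\<in>{1..5}. nuK K i x = nu K i"
    and "mK K k D sinn mu x = m K k D sinn mu x"
    and "fK K k D sinn mu x = f k D sinn mu x"
proof -
  obtain b s where x: "x = (b, s)"
    by fastforce
  note large = off_RK_scales_large[OF assms(1) assms(3)[unfolded x]]
  then have nu_eq: "nuK K i x = nu K i" for i
    unfolding x by (intro nuK_eq_nu) auto
  then show "\<forall>i\<in>{1..5}. nuK K i x = nu K i"
    by blast
  show "mK K k D sinn mu x = m K k D sinn mu x"
    unfolding mK_def m_def nu_eq ..
  have "1 / b \<le> K 4" "1 / s \<le> K 2" "1 / s \<le> K 5"
    using large by (simp_all add: field_simps)
  moreover have "0 \<le> b" "0 \<le> s"
    using large by simp_all
  ultimately show "fK K k D sinn mu x = f k D sinn mu x"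
    unfolding x using fK_eq_f[where mu = mu, OF assms(1,2)] by blast
qed

lemma norm_fK_minus_f_eventually_less:
  assumes "C \<subseteq> Rplus2" "mu 0 = 0" "\<forall>(b, s)\<in>C. 1 / b \<le> L \<and> 1 / s \<le> L" "\<epsilon> > 0"
  shows "\<exists>M. \<forall>K'. (\<forall>i\<in>{1..5}. K' i \<ge> M) \<longrightarrow>
    (\<forall>x\<in>C. norm (fK K' k D sinn mu x - f k D sinn mu x) < \<epsilon>)"
  using fK_eq_f_for_large_scales[where mu = mu, OF assms(1-3)] assms(4) by (metis diff_self norm_zero)

lemma fK_tendsto_f_pointwise:
  assumes "mu 0 = 0" "x \<in> Rplus2" "\<epsilon> > 0"
  shows "\<exists>M. \<forall>K'. (\<forall>i\<in>{1..5}. K' i \<ge> M) \<longrightarrow> norm (fK K' k D sinn mu x - f k D sinn mu x) < \<epsilon>"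
proof -
  obtain b s where "x = (b, s)"
    by (cases x)
  then show ?thesis
    using norm_fK_minus_f_eventually_less[of "{x}" mu "max (1 / b) (1 / s)" \<epsilon>] assms by simp
qed

lemma fK_tendsto_f_uniformly_on_compact:
  fixes C :: "(real \<times> real) set"
  assumes "mu 0 = 0" "compact C" "C \<subseteq> {0<..} \<times> {0<..}" "\<epsilon> > 0"
  shows "\<exists>M. \<forall>K'. (\<forall>i\<in>{1..5}. K' i \<ge> M) \<longrightarrow>
    (\<forall>x\<in>C. norm (fK K' k D sinn mu x - f k D sinn mu x) < \<epsilon>)"
proof -
  have "C \<subseteq> Rplus2"
    using assms(3) by (force simp: Rplus2_def)
  then show ?thesis
    using compact_in_open_quadrant_inverse_bounded[OF assms(2,3)] norm_fK_minus_f_eventually_less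
      assms(1,4) by blast
qed

lemma approximation_errors_le:
  assumes "\<forall>i\<in>{1..5}. K i > 0" "k > 0" "D > 0" "sinn > 0" "\<forall>s\<ge>0. 0 \<le> mu s" "b \<ge> 0" "s \<ge> 0"
  shows "(\<forall>i\<in>{1..5}. norm (nuK K i (b, s) - nu K i) \<le> 1 / Kmin K)
    \<and> norm (mK K k D sinn mu (b, s) - m K k D sinn mu (b, s)) \<le> 1 / Kmin K
    \<and> norm (fK K k D sinn mu (b, s) - f k D sinn mu (b, s))
        \<le> max 0 (1 - K 2 * s) * k * mu s * b + max 0 (1 - K 4 * b) * D * b
           + max 0 (1 - K 5 * s) * D * s"
proof -
  have "norm (nuK K i (b, s) - nu K i) \<le> 1 / Kmin K" if "i \<in> {1..5}" for i
    using assms(1) that assms(6,7) by (rule norm_nuK_minus_nu_le_Kmin)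
  moreover have "0 \<le> mu s"
    using assms(5,7) by simp
  ultimately show ?thesis
    using norm_mK_minus_m_le[where mu = mu, OF assms(1-4) _ assms(6,7)]
      norm_fK_minus_f_le[where mu = mu, OF assms(1-3) _ assms(6,7)] by simp
qed

theorem lemma1:
  fixes K :: "nat \<Rightarrow> real" and k D sinn mumax :: real and mu :: "real \<Rightarrow> real"
  assumes k_pos: "k > 0" and D_pos: "D > 0" and sin_pos: "sinn > 0"
    and K_pos: "\<forall>i\<in>{1..5}. K i > 0"
    and mu0: "mu 0 = 0"
    and mu_pos: "\<forall>s>0. mu s > 0"
    and mu_nonneg: "\<forall>s\<ge>0. 0 \<le> mu s"
    and mu_bdd: "\<forall>s\<ge>0. mu s \<le> mumax"
    and mu_cont: "continuous (at 0 within {0..}) mu"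
  shows
    "(\<forall>i\<in>{1..5}. \<forall>x\<in>Rplus2. norm (nuK K i x) \<le> norm (nu K i))
   \<and> (\<forall>x\<in>Rplus2 - RK K.
        (\<forall>i\<in>{1..5}. nuK K i x = nu K i)
        \<and> mK K k D sinn mu x = m K k D sinn mu x
        \<and> fK K k D sinn mu x = f k D sinn mu x)
   \<and> (\<forall>x\<in>Rplus2. (\<forall>i\<in>{1..5}. norm (nuK K i x - nu K i) \<le> 1 / Kmin K)
        \<and> norm (mK K k D sinn mu x - m K k D sinn mu x) \<le> 1 / Kmin K
        \<and> (case x of (b, s) \<Rightarrow>
             norm (fK K k D sinn mu x - f k D sinn mu x)
               \<le> max 0 (1 - K 2 * s) * k * mu s * b + max 0 (1 - K 4 * b) * D * b
                  + max 0 (1 - K 5 * s) * D * s))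
   \<and> (\<forall>x\<in>Rplus2. \<forall>\<epsilon>>0. \<exists>M. \<forall>K'. (\<forall>i\<in>{1..5}. K' i \<ge> M) \<longrightarrow>
        norm (fK K' k D sinn mu x - f k D sinn mu x) < \<epsilon>)
   \<and> (\<forall>C. compact C \<and> C \<subseteq> {0<..} \<times> {0<..} \<longrightarrow>
        (\<forall>\<epsilon>>0. \<exists>M. \<forall>K'. (\<forall>i\<in>{1..5}. K' i \<ge> M) \<longrightarrow>
          (\<forall>x\<in>C. norm (fK K' k D sinn mu x - f k D sinn mu x) < \<epsilon>)))"
proof -
  have jumps_bounded: "\<forall>i\<in>{1..5}. \<forall>x\<in>Rplus2. norm (nuK K i x) \<le> norm (nu K i)"
    unfolding Rplus2_def using norm_nuK_le_norm_nu[OF K_pos] by blast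
  have errors: "\<forall>x\<in>Rplus2. (\<forall>i\<in>{1..5}. norm (nuK K i x - nu K i) \<le> 1 / Kmin K)
      \<and> norm (mK K k D sinn mu x - m K k D sinn mu x) \<le> 1 / Kmin K
      \<and> (case x of (b, s) \<Rightarrow> norm (fK K k D sinn mu x - f k D sinn mu x)
           \<le> max 0 (1 - K 2 * s) * k * mu s * b + max 0 (1 - K 4 * b) * D * b
              + max 0 (1 - K 5 * s) * D * s)"
    unfolding Rplus2_def using approximation_errors_le[OF K_pos k_pos D_pos sin_pos mu_nonneg] by blast
  show ?thesis
  proof (intro conjI)
    show "\<forall>x\<in>Rplus2 - RK K. (\<forall>i\<in>{1..5}. nuK K i x = nu K i)
      \<and> mK K k D sinn mu x = m K k D sinn mu x \<and> fK K k D sinn mu x = f k D sinn mu x"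
      using off_RK_agree[where mu = mu, OF K_pos mu0] by blast
    show "\<forall>x\<in>Rplus2. \<forall>\<epsilon>>0. \<exists>M. \<forall>K'. (\<forall>i\<in>{1..5}. K' i \<ge> M) \<longrightarrow>
        norm (fK K' k D sinn mu x - f k D sinn mu x) < \<epsilon>"
      using fK_tendsto_f_pointwise[where mu = mu, OF mu0] by blast
    show "\<forall>C. compact C \<and> C \<subseteq> {0<..} \<times> {0<..} \<longrightarrow>
        (\<forall>\<epsilon>>0. \<exists>M. \<forall>K'. (\<forall>i\<in>{1..5}. K' i \<ge> M) \<longrightarrow>
          (\<forall>x\<in>C. norm (fK K' k D sinn mu x - f k D sinn mu x) < \<epsilon>))"
      using fK_tendsto_f_uniformly_on_compact[where mu = mu, OF mu0] by blast
  qed (fact jumps_bounded errors)+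
qed

end
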